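(* Let $m,k,n\ge1$ be integers; let $\lambda_i,\mu_i>0$ ($i\le k$), $\alpha_j,\beta_j,u_j,v_j>0$ ($j\le n$); let $\theta:\{0,\dots,m\}\to\mathbb{R}$ satisfy $0\le\theta\le1$, $\theta(b)>0$ for $b<m$, $\theta(m)=0$. Consider the CTMC on the set $\mathcal{S}$ of vectors $w=(x_1,\dots,x_k;a_1,\dots,a_n)$, $x_i\in\mathbb{Z}_{\ge0}$, $a_j\in\{I,W,T\}$, with $\mathrm{busy}(w)=\sum_i x_i+\sum_j1_{\{a_j=T\}}\le m$, whose only nonzero rates are: $x\to x+e_i$ at rate $\lambda_i\theta(\mathrm{busy}(w))$ and $x+e_i\to x$ at rate $(x_i+1)\mu_i$; and, for each $j$ changing only $a_j$: $I\to W$ at rate $\alpha_j$, $W\to I$ at rate $\beta_j$, $W\to T$ at rate $u_j\theta(\mathrm{busy}(w))$ ($w$ the current state), $T\to W$ at rate $v_j$. Its steady state distribution has the form $p(w)=B\big(\prod_{r=0}^{\mathrm{busy}(w)-1}\theta(r)\big)\big(\prod_{i}\rho_i^{x_i}/x_i!\big)\prod_j(\alpha_j/\beta_j)^{1_{\{a_j=W\}}}(\alpha_ju_j/(\beta_jv_j))^{1_{\{a_j=T\}}}$, $\rho_i=\lambda_i/\mu_i$, for a normalizing constant $B$. Let $\rho=\sum_i\rho_i$, $g=\min[n,m]$ and $\mathrm{i}=\sqrt{-1}$. Define $$C_t=\prod_{j=1}^n\Big[1+\frac{\alpha_j}{\beta_j}+e^{\frac{-2\pi \mathrm{i} t}{n+1}}\frac{\alpha_ju_j}{\beta_jv_j}\Big],\quad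 t\in\{0,\dots,n\},\qquad c_b=\frac{1}{n+1}\sum_{t=0}^nC_te^{\frac{2\pi \mathrm{i} tb}{n+1}},\quad b\in\{0,\dots,g\}.$$ Then $$B=\frac{1}{\sum_{b=0}^g\sum_{x=0}^{m-b}\frac{\rho^x}{x!}\big(\prod_{r=0}^{x+b-1}\theta(r)\big)c_b}.$$ Further, in the special case with no non-persistent users (i.e. $\rho\to0$), the normalizing constant is replaced by $$\tilde B=\frac{1}{\sum_{b=0}^g\big(\prod_{r=0}^{b-1}\theta(r)\big)c_b}.$$
   Context: Multi-channel access model with $m$ channels, $k$ classes of non-persistent users and $n$ persistent users with activity states Idle ($I$), Waiting ($W$), Transmitting ($T$). Empty products $\prod_{r=0}^{-1}\theta(r)$ equal $1$. In the case with no non-persistent users, the steady state probability of persistent configuration $a$ is $\tilde B\big(\prod_{r=0}^{\mathrm{busy}_p(a)-1}\theta(r)\big)\prod_j(\alpha_j/\beta_j)^{1_{\{a_j=W\}}}(\alpha_ju_j/(\beta_jv_j))^{1_{\{a_j=T\}}}$ with $\mathrm{busy}_p(a)=\sum_j1_{\{a_j=T\}}\le m$. *)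

theory Defs
  imports "HOL-Analysis.Analysis"
begin

datatype act = Idle | Waiting | Transmitting

text \<open>A state is a pair (x, a): x i = number of class-i non-persistent users (i < k),
  a j = activity of persistent user j (j < n). Indices outside range are fixed to 0 / Idle.\<close>

definition busy :: "nat \<Rightarrow> nat \<Rightarrow> (nat \<Rightarrow> nat) \<times> (nat \<Rightarrow> act) \<Rightarrow> nat" where
  "busy k n w = (\<Sum>i<k. fst w i) + card {j. j < n \<and> snd w j = Transmitting}"

definition states :: "nat \<Rightarrow> nat \<Rightarrow> nat \<Rightarrow> ((nat \<Rightarrow> nat) \<times> (nat \<Rightarrow> act)) set" where
  "states m k n = {w. (\<forall>i\<ge>k. fst w i = 0) \<and> (\<forall>j\<ge>n. snd w j = Idle) \<and> busy k n w \<le> m}"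

definition weight :: "nat \<Rightarrow> nat \<Rightarrow> (nat \<Rightarrow> real) \<Rightarrow> (nat \<Rightarrow> real) \<Rightarrow> (nat \<Rightarrow> real) \<Rightarrow>
    (nat \<Rightarrow> real) \<Rightarrow> (nat \<Rightarrow> real) \<Rightarrow> (nat \<Rightarrow> real) \<Rightarrow> (nat \<Rightarrow> real) \<Rightarrow>
    (nat \<Rightarrow> nat) \<times> (nat \<Rightarrow> act) \<Rightarrow> real" where
  "weight k n lam mu alpha beta u v theta w =
     (\<Prod>r<busy k n w. theta r) *
     (\<Prod>i<k. (lam i / mu i) ^ fst w i / fact (fst w i)) *
     (\<Prod>j<n. (if snd w j = Waiting then alpha j / beta j
              else if snd w j = Transmitting then alpha j * u j / (beta j * v j) else 1))"

definition C_coef :: "nat \<Rightarrow> (nat \<Rightarrow> real) \<Rightarrow> (nat \<Rightarrow> real) \<Rightarrow> (nat \<Rightarrow> real) \<Rightarrow> (nat \<Rightarrow> real) \<Rightarrow> nat \<Rightarrow> complex" where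
  "C_coef n alpha beta u v t = (\<Prod>j<n. 1 + of_real (alpha j / beta j)
      + exp (- 2 * of_real pi * \<i> * of_nat t / of_nat (n+1)) * of_real (alpha j * u j / (beta j * v j)))"

definition c_coef :: "nat \<Rightarrow> (nat \<Rightarrow> real) \<Rightarrow> (nat \<Rightarrow> real) \<Rightarrow> (nat \<Rightarrow> real) \<Rightarrow> (nat \<Rightarrow> real) \<Rightarrow> nat \<Rightarrow> complex" where
  "c_coef n alpha beta u v b = 1 / of_nat (n+1) *
      (\<Sum>t\<le>n. C_coef n alpha beta u v t * exp (2 * of_real pi * \<i> * of_nat t * of_nat b / of_nat (n+1)))"

end

theory Submission
  imports Defs
begin

(*
  Every weight factorises as a theta-product over the busy channels, a non-persistent part
  and a persistent part. Grouping the states by the number x of non-persistent users and the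
  number b of transmitting persistent users, the multinomial theorem sums the non-persistent
  part to rho^x / x!, and the persistent part sums to the coefficient q_b of z^b in
  P(z) = prod_j (1 + alpha_j / beta_j + z alpha_j u_j / (beta_j v_j)). Since C_t = P(w^-t) for
  the (n+1)-th root of unity w and deg P <= n, discrete Fourier inversion gives c_b = q_b.
  The normalising constant is the reciprocal of the total weight; without non-persistent
  users only x = 0 contributes.
*)

lemma sum_roots_of_unity_ratio_power:
  fixes N b c :: nat
  assumes "b < N" "c < N"
  defines "\<omega> j \<equiv> exp (2 * of_real pi * \<i> * of_nat j / of_nat N)"
  shows "(\<Sum>t<N. (\<omega> b / \<omega> c) ^ t) = (if b = c then of_nat N else 0)"
proof (cases "b = c")
  case False
  have "N \<ge> 1" using assms by simp
  have "\<omega> b \<noteq> \<omega> c"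
    using False assms complex_root_unity_eq[OF \<open>N \<ge> 1\<close>, of b c] by (simp add: \<omega>_def)
  then have "\<omega> b / \<omega> c \<noteq> 1" by (simp add: \<omega>_def)
  moreover have "(\<omega> b / \<omega> c) ^ N = 1"
    using complex_root_unity[of N] assms by (simp add: \<omega>_def power_divide)
  ultimately show ?thesis
    using False by (simp add: geometric_sum)
qed (simp add: \<omega>_def)

lemma discrete_fourier_inversion:
  fixes q :: "nat \<Rightarrow> complex" and N b :: nat
  assumes "b < N"
  shows "(\<Sum>t<N. (\<Sum>c<N. q c * exp (- 2 * of_real pi * \<i> * of_nat t / of_nat N) ^ c)
                 * exp (2 * of_real pi * \<i> * of_nat t * of_nat b / of_nat N)) = of_nat N * q b"
proof -
  define \<omega> where "\<omega> j = exp (2 * of_real pi * \<i> * of_nat j / of_nat N)" for j :: nat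
  have twiddle: "exp (- 2 * of_real pi * \<i> * of_nat t / of_nat N) ^ c
                 * exp (2 * of_real pi * \<i> * of_nat t * of_nat b / of_nat N) = (\<omega> b / \<omega> c) ^ t"
    for t c :: nat
  proof -
    have "exp (- 2 * of_real pi * \<i> * of_nat t / of_nat N) ^ c
            * exp (2 * of_real pi * \<i> * of_nat t * of_nat b / of_nat N)
        = exp (of_nat c * (- 2 * of_real pi * \<i> * of_nat t / of_nat N)
               + 2 * of_real pi * \<i> * of_nat t * of_nat b / of_nat N)"
      by (simp only: exp_add exp_of_nat_mult)
    also have "\<dots> = exp (of_nat t * (2 * of_real pi * \<i> * of_nat b / of_nat N)
                         - of_nat t * (2 * of_real pi * \<i> * of_nat c / of_nat N))"
      by (rule arg_cong[where f = exp]) (simp add: field_simps)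
    also have "\<dots> = (\<omega> b / \<omega> c) ^ t"
      by (simp only: exp_diff exp_of_nat_mult power_divide \<omega>_def)
    finally show ?thesis .
  qed
  have "(\<Sum>t<N. (\<Sum>c<N. q c * exp (- 2 * of_real pi * \<i> * of_nat t / of_nat N) ^ c)
                 * exp (2 * of_real pi * \<i> * of_nat t * of_nat b / of_nat N))
      = (\<Sum>t<N. \<Sum>c<N. q c * (\<omega> b / \<omega> c) ^ t)"
    unfolding sum_distrib_right by (intro sum.cong refl) (metis twiddle mult.assoc)
  also have "\<dots> = (\<Sum>c<N. q c * (\<Sum>t<N. (\<omega> b / \<omega> c) ^ t))"
    by (subst sum.swap) (simp add: sum_distrib_left)
  also have "\<dots> = of_nat N * q b"
    using assms by (simp add: \<omega>_def sum_roots_of_unity_ratio_power if_distrib cong: if_cong)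
  finally show ?thesis .
qed

definition occupancies :: "nat \<Rightarrow> nat \<Rightarrow> (nat \<Rightarrow> nat) set" where
  "occupancies k s = {x. (\<forall>i\<ge>k. x i = 0) \<and> (\<Sum>i<k. x i) = s}"

lemma finite_occupancies: "finite (occupancies k s)"
proof -
  have "x i \<le> s" if "x \<in> occupancies k s" "i < k" for x i
    using that member_le_sum[of i "{..<k}" x] by (auto simp: occupancies_def)
  then have "occupancies k s \<subseteq> {x. \<forall>i. (i \<in> {..<k} \<longrightarrow> x i \<in> {..s}) \<and> (i \<notin> {..<k} \<longrightarrow> x i = 0)}"
    by (auto simp: occupancies_def)
  then show ?thesis
    by (rule finite_subset) (intro finite_set_of_finite_funs; simp)
qed

lemma bij_betw_occupancies_Suc:
  "bij_betw (\<lambda>(j, y). y(k := j)) (SIGMA j:{..s}. occupancies k (s - j)) (occupancies (Suc k) s)"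
proof (rule bij_betwI[where g = "\<lambda>x. (x k, x(k := 0))"])
  have sum_upd: "(\<Sum>i<k. (x(k := j)) i) = (\<Sum>i<k. x i)" for x :: "nat \<Rightarrow> nat" and j
    by (intro sum.cong) auto
  show "(\<lambda>(j, y). y(k := j)) \<in> (SIGMA j:{..s}. occupancies k (s - j)) \<rightarrow> occupancies (Suc k) s"
    by (auto simp: occupancies_def sum_upd)
  show "(\<lambda>x. (x k, x(k := 0))) \<in> occupancies (Suc k) s \<rightarrow> (SIGMA j:{..s}. occupancies k (s - j))"
    by (auto simp: occupancies_def sum_upd)
  show "((\<lambda>(j, y). y(k := j)) p k, ((\<lambda>(j, y). y(k := j)) p)(k := 0)) = p"
    if "p \<in> (SIGMA j:{..s}. occupancies k (s - j))" for p
    using that by (auto simp: occupancies_def)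
  show "(\<lambda>(j, y). y(k := j)) (x k, x(k := 0)) = x" for x
    by simp
qed

lemma sum_occupancies_multinomial:
  fixes r :: "nat \<Rightarrow> 'a::field_char_0"
  shows "(\<Sum>x\<in>occupancies k s. \<Prod>i<k. r i ^ x i / fact (x i)) = (\<Sum>i<k. r i) ^ s / fact s"
proof (induction k arbitrary: s)
  case 0
  have "occupancies 0 s = (if s = 0 then {\<lambda>_. 0} else {})"
    unfolding occupancies_def by auto
  then show ?case by simp
next
  case (Suc k)
  have "(\<Sum>x\<in>occupancies (Suc k) s. \<Prod>i<Suc k. r i ^ x i / fact (x i))
      = (\<Sum>p\<in>(SIGMA j:{..s}. occupancies k (s - j)).
           \<Prod>i<Suc k. r i ^ ((\<lambda>(j, y). y(k := j)) p) i / fact (((\<lambda>(j, y). y(k := j)) p) i))"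
    by (rule sum.reindex_bij_betw[OF bij_betw_occupancies_Suc, symmetric])
  also have "\<dots> = (\<Sum>j\<le>s. \<Sum>y\<in>occupancies k (s - j).
                     \<Prod>i<Suc k. r i ^ (y(k := j)) i / fact ((y(k := j)) i))"
    by (subst sum.Sigma) (auto simp: finite_occupancies split_beta)
  also have "\<dots> = (\<Sum>j\<le>s. \<Sum>y\<in>occupancies k (s - j).
                     r k ^ j / fact j * (\<Prod>i<k. r i ^ y i / fact (y i)))"
  proof -
    have "(\<Prod>i<k. r i ^ (y(k := j)) i / fact ((y(k := j)) i)) = (\<Prod>i<k. r i ^ y i / fact (y i))"
      for y j by (intro prod.cong) auto
    then show ?thesis
      by (simp only: prod.lessThan_Suc fun_upd_same mult.commute)
  qed
  also have "\<dots> = (\<Sum>j\<le>s. r k ^ j / fact j *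
                     (\<Sum>y\<in>occupancies k (s - j). \<Prod>i<k. r i ^ y i / fact (y i)))"
    by (simp add: sum_distrib_left)
  also have "\<dots> = (\<Sum>j\<le>s. of_nat (s choose j) * r k ^ j * (\<Sum>i<k. r i) ^ (s - j)) / fact s"
    unfolding Suc.IH sum_divide_distrib
    by (intro sum.cong refl) (simp add: binomial_fact field_simps)
  also have "\<dots> = (\<Sum>i<Suc k. r i) ^ s / fact s"
    by (simp add: binomial_ring add.commute)
  finally show ?case .
qed

lemma normalizing_constant_eq:
  fixes B :: "'b::field"
  assumes "\<forall>w\<in>S. p w = B * f w" and "sum p S = 1"
  shows "B = 1 / sum f S"
proof -
  have "B * sum f S = 1"
    using assms by (simp add: sum_distrib_left)
  moreover from this have "sum f S \<noteq> 0"
    by auto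
  ultimately show ?thesis
    by (simp add: eq_divide_eq)
qed

definition configs :: "nat \<Rightarrow> (nat \<Rightarrow> act) set" where
  "configs n = {a. \<forall>j\<ge>n. a j = Idle}"

definition transmitting :: "nat \<Rightarrow> (nat \<Rightarrow> act) \<Rightarrow> nat" where
  "transmitting n a = card {j. j < n \<and> a j = Transmitting}"

lemma UNIV_act: "(UNIV :: act set) = {Idle, Waiting, Transmitting}"
  using act.exhaust by auto

lemma finite_UNIV_act [simp]: "finite (UNIV :: act set)"
  by (simp add: UNIV_act)

lemma finite_configs: "finite (configs n)"
proof -
  have "configs n = {a. \<forall>j. (j \<in> {..<n} \<longrightarrow> a j \<in> UNIV) \<and> (j \<notin> {..<n} \<longrightarrow> a j = Idle)}"
    unfolding configs_def by auto
  then show ?thesis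
    using finite_set_of_finite_funs[OF finite_lessThan finite_UNIV_act] by simp
qed

lemma transmitting_le: "transmitting n a \<le> n"
  unfolding transmitting_def using card_mono[of "{..<n}" "{j. j < n \<and> a j = Transmitting}"] by auto

lemma prod_sum_configs:
  fixes f :: "nat \<Rightarrow> act \<Rightarrow> 'a::comm_semiring_1"
  shows "(\<Prod>j<n. \<Sum>s\<in>UNIV. f j s) = (\<Sum>a\<in>configs n. \<Prod>j<n. f j (a j))"
proof -
  define extend where "extend g = (\<lambda>j. if j < n then g j else Idle)" for g :: "nat \<Rightarrow> act"
  have bij: "bij_betw extend (PiE {..<n} (\<lambda>_. UNIV)) (configs n)"
    by (rule bij_betwI[where g = "\<lambda>a. restrict a {..<n}"])
       (auto simp: extend_def configs_def PiE_def extensional_def)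
  have "(\<Prod>j<n. \<Sum>s\<in>UNIV. f j s) = (\<Sum>g\<in>PiE {..<n} (\<lambda>_. UNIV). \<Prod>j<n. f j (g j))"
    by (rule prod_sum_PiE) auto
  also have "\<dots> = (\<Sum>g\<in>PiE {..<n} (\<lambda>_. UNIV). \<Prod>j<n. f j (extend g j))"
    by (intro sum.cong prod.cong refl) (auto simp: extend_def)
  also have "\<dots> = (\<Sum>a\<in>configs n. \<Prod>j<n. f j (a j))"
    by (rule sum.reindex_bij_betw[OF bij])
  finally show ?thesis .
qed

lemma prod_if_Transmitting_eq_power:
  "(\<Prod>j<n. if a j = Transmitting then z else 1) = z ^ transmitting n a"
proof -
  have "{..<n} \<inter> {j. a j = Transmitting} = {j. j < n \<and> a j = Transmitting}" by auto
  then show ?thesis by (simp add: prod.If_cases transmitting_def)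
qed

definition act_weight :: "(nat \<Rightarrow> real) \<Rightarrow> (nat \<Rightarrow> real) \<Rightarrow> (nat \<Rightarrow> real) \<Rightarrow> (nat \<Rightarrow> real) \<Rightarrow>
    nat \<Rightarrow> act \<Rightarrow> real" where
  "act_weight alpha beta u v j s =
     (if s = Waiting then alpha j / beta j
      else if s = Transmitting then alpha j * u j / (beta j * v j) else 1)"

definition config_weight :: "nat \<Rightarrow> (nat \<Rightarrow> real) \<Rightarrow> (nat \<Rightarrow> real) \<Rightarrow> (nat \<Rightarrow> real) \<Rightarrow>
    (nat \<Rightarrow> real) \<Rightarrow> (nat \<Rightarrow> act) \<Rightarrow> real" where
  "config_weight n alpha beta u v a = (\<Prod>j<n. act_weight alpha beta u v j (a j))"

definition transmitting_weight :: "nat \<Rightarrow> (nat \<Rightarrow> real) \<Rightarrow> (nat \<Rightarrow> real) \<Rightarrow> (nat \<Rightarrow> real) \<Rightarrow>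
    (nat \<Rightarrow> real) \<Rightarrow> nat \<Rightarrow> real" where
  "transmitting_weight n alpha beta u v b =
     (\<Sum>a\<in>{a\<in>configs n. transmitting n a = b}. config_weight n alpha beta u v a)"

lemma generating_polynomial_transmitting_weight:
  fixes z :: complex
  shows "(\<Prod>j<n. 1 + of_real (alpha j / beta j) + z * of_real (alpha j * u j / (beta j * v j)))
     = (\<Sum>b\<le>n. of_real (transmitting_weight n alpha beta u v b) * z ^ b)"
proof -
  define f where "f j s = of_real (act_weight alpha beta u v j s) * (if s = Transmitting then z else 1)"
    for j s
  have "(\<Prod>j<n. 1 + of_real (alpha j / beta j) + z * of_real (alpha j * u j / (beta j * v j)))
      = (\<Prod>j<n. \<Sum>s\<in>UNIV. f j s)"
    by (intro prod.cong refl) (simp add: UNIV_act f_def act_weight_def mult.commute)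
  also have "\<dots> = (\<Sum>a\<in>configs n. of_real (config_weight n alpha beta u v a) * z ^ transmitting n a)"
    by (simp add: prod_sum_configs f_def prod.distrib config_weight_def prod_if_Transmitting_eq_power)
  also have "\<dots> = (\<Sum>b\<le>n. \<Sum>a\<in>{a\<in>configs n. transmitting n a = b}.
                     of_real (config_weight n alpha beta u v a) * z ^ transmitting n a)"
    by (rule sum.group[symmetric]) (auto simp: finite_configs transmitting_le)
  also have "\<dots> = (\<Sum>b\<le>n. of_real (transmitting_weight n alpha beta u v b) * z ^ b)"
    by (simp add: transmitting_weight_def sum_distrib_right)
  finally show ?thesis .
qed

lemma c_coef_eq_transmitting_weight:
  assumes "b \<le> n"
  shows "c_coef n alpha beta u v b = of_real (transmitting_weight n alpha beta u v b)"
proof -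
  define q where "q c = complex_of_real (transmitting_weight n alpha beta u v c)" for c
  have C: "C_coef n alpha beta u v t
           = (\<Sum>c<n+1. q c * exp (- 2 * of_real pi * \<i> * of_nat t / of_nat (n+1)) ^ c)" for t
    unfolding C_coef_def generating_polynomial_transmitting_weight q_def
    by (simp add: lessThan_Suc_atMost)
  have "(\<Sum>t\<le>n. C_coef n alpha beta u v t * exp (2 * of_real pi * \<i> * of_nat t * of_nat b / of_nat (n+1)))
        = of_nat (n+1) * q b"
    using discrete_fourier_inversion[of b "n+1" q] assms
    by (simp only: C flip: lessThan_Suc_atMost) simp
  then show ?thesis
    unfolding c_coef_def q_def by (simp del: of_nat_Suc)
qed

lemma busy_eq: "busy k n w = (\<Sum>i<k. fst w i) + transmitting n (snd w)"
  by (simp add: busy_def transmitting_def)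

lemma finite_states: "finite (states m k n)"
proof (rule finite_subset)
  show "states m k n \<subseteq> (\<Union>s\<le>m. occupancies k s) \<times> configs n"
    by (force simp: states_def busy_eq occupancies_def configs_def)
  show "finite ((\<Union>s\<le>m. occupancies k s) \<times> configs n)"
    by (simp add: finite_occupancies finite_configs)
qed

lemma states_fibre:
  assumes "b \<le> m" and "s \<le> m - b"
  shows "{w\<in>states m k n. transmitting n (snd w) = b \<and> (\<Sum>i<k. fst w i) = s}
         = occupancies k s \<times> {a\<in>configs n. transmitting n a = b}"
  using assms by (auto simp: states_def busy_eq occupancies_def configs_def)

lemma weight_Pair:
  assumes "x \<in> occupancies k s" and "transmitting n a = b"
  shows "weight k n lam mu alpha beta u v theta (x, a)
         = (\<Prod>r<s + b. theta r) * (\<Prod>i<k. (lam i / mu i) ^ x i / fact (x i))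
           * config_weight n alpha beta u v a"
  using assms unfolding weight_def busy_eq config_weight_def act_weight_def fst_conv snd_conv
  by (simp add: occupancies_def)

lemma sum_weight_fibre:
  "(\<Sum>w\<in>occupancies k s \<times> {a\<in>configs n. transmitting n a = b}.
      weight k n lam mu alpha beta u v theta w)
   = (\<Sum>i<k. lam i / mu i) ^ s / fact s * (\<Prod>r<s + b. theta r) * transmitting_weight n alpha beta u v b"
proof -
  have "(\<Sum>w\<in>occupancies k s \<times> {a\<in>configs n. transmitting n a = b}.
          weight k n lam mu alpha beta u v theta w)
      = (\<Sum>(x, a)\<in>occupancies k s \<times> {a\<in>configs n. transmitting n a = b}.
          (\<Prod>r<s + b. theta r) * (\<Prod>i<k. (lam i / mu i) ^ x i / fact (x i))
          * config_weight n alpha beta u v a)"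
    by (intro sum.cong refl) (auto simp: weight_Pair)
  also have "\<dots> = (\<Sum>x\<in>occupancies k s. \<Sum>a\<in>{a\<in>configs n. transmitting n a = b}.
          (\<Prod>r<s + b. theta r) * (\<Prod>i<k. (lam i / mu i) ^ x i / fact (x i))
          * config_weight n alpha beta u v a)"
    by (rule sum.cartesian_product[symmetric])
  also have "\<dots> = (\<Prod>r<s + b. theta r)
                   * ((\<Sum>x\<in>occupancies k s. \<Prod>i<k. (lam i / mu i) ^ x i / fact (x i))
                      * (\<Sum>a\<in>{a\<in>configs n. transmitting n a = b}. config_weight n alpha beta u v a))"
    by (simp only: sum_product) (simp only: sum_distrib_left mult.assoc)
  finally show ?thesis
    by (simp add: sum_occupancies_multinomial transmitting_weight_def mult_ac)
qed

lemma sum_weight_states: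
  "(\<Sum>w\<in>states m k n. weight k n lam mu alpha beta u v theta w)
   = (\<Sum>b\<le>min n m. \<Sum>s\<le>m - b. ((\<Sum>i<k. lam i / mu i) ^ s / fact s * (\<Prod>r<s + b. theta r))
        * transmitting_weight n alpha beta u v b)"
proof -
  define key where "key w = (transmitting n (snd w), \<Sum>i<k. fst w i)"
    for w :: "(nat \<Rightarrow> nat) \<times> (nat \<Rightarrow> act)"
  have "key ` states m k n \<subseteq> (SIGMA b:{..min n m}. {..m - b})"
    using transmitting_le by (fastforce simp: key_def states_def busy_eq)
  then have "(\<Sum>w\<in>states m k n. weight k n lam mu alpha beta u v theta w)
      = (\<Sum>p\<in>(SIGMA b:{..min n m}. {..m - b}).
           \<Sum>w\<in>{w\<in>states m k n. key w = p}. weight k n lam mu alpha beta u v theta w)"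
    by (intro sum.group[symmetric] finite_states) auto
  also have "\<dots> = (\<Sum>b\<le>min n m. \<Sum>s\<le>m - b.
           \<Sum>w\<in>{w\<in>states m k n. key w = (b, s)}. weight k n lam mu alpha beta u v theta w)"
    by (subst sum.Sigma) auto
  also have "\<dots> = (\<Sum>b\<le>min n m. \<Sum>s\<le>m - b.
           \<Sum>w\<in>occupancies k s \<times> {a\<in>configs n. transmitting n a = b}.
             weight k n lam mu alpha beta u v theta w)"
    by (intro sum.cong refl) (simp add: key_def states_fibre)
  finally show ?thesis
    by (simp add: sum_weight_fibre)
qed

theorem lemma1:
  fixes m k n :: nat and lam mu alpha beta u v theta :: "nat \<Rightarrow> real"
    and B Bt :: real and p pt :: "(nat \<Rightarrow> nat) \<times> (nat \<Rightarrow> act) \<Rightarrow> real"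
  assumes "m \<ge> 1" "k \<ge> 1" "n \<ge> 1"
    and "\<forall>i<k. lam i > 0 \<and> mu i > 0"
    and "\<forall>j<n. alpha j > 0 \<and> beta j > 0 \<and> u j > 0 \<and> v j > 0"
    and "\<forall>b\<le>m. 0 \<le> theta b \<and> theta b \<le> 1"
    and "\<forall>b<m. theta b > 0" and "theta m = 0"
    and "\<forall>w\<in>states m k n. p w = B * weight k n lam mu alpha beta u v theta w"
    and "(\<Sum>w\<in>states m k n. p w) = 1"
    and "\<forall>w\<in>states m 0 n. pt w = Bt * weight 0 n lam mu alpha beta u v theta w"
    and "(\<Sum>w\<in>states m 0 n. pt w) = 1"
  shows "complex_of_real B = 1 / (\<Sum>b\<le>min n m. \<Sum>x\<le>m - b.
            of_real (((\<Sum>i<k. lam i / mu i) ^ x / fact x) * (\<Prod>r<x + b. theta r))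
            * c_coef n alpha beta u v b)
     \<and> complex_of_real Bt = 1 / (\<Sum>b\<le>min n m. of_real (\<Prod>r<b. theta r) * c_coef n alpha beta u v b)"
proof -
  have c_coef_real: "c_coef n alpha beta u v b = of_real (transmitting_weight n alpha beta u v b)"
    if "b \<in> {..min n m}" for b
    using that by (simp add: c_coef_eq_transmitting_weight)
  have "B = 1 / (\<Sum>w\<in>states m k n. weight k n lam mu alpha beta u v theta w)"
    using assms(9,10) by (rule normalizing_constant_eq)
  moreover have "Bt = 1 / (\<Sum>w\<in>states m 0 n. weight 0 n lam mu alpha beta u v theta w)"
    using assms(11,12) by (rule normalizing_constant_eq)
  moreover have "(\<Sum>w\<in>states m 0 n. weight 0 n lam mu alpha beta u v theta w)
               = (\<Sum>b\<le>min n m. (\<Prod>r<b. theta r) * transmitting_weight n alpha beta u v b)"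
    by (simp add: sum_weight_states sum.atMost_shift)
  ultimately show ?thesis
    unfolding sum_weight_states of_real_divide of_real_sum of_real_mult
    by (simp add: c_coef_real)
qed

end
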